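(* Let $n\ge 1$ and let $X_1,\dots,X_n$ be positive random variables that are jointly continuously distributed, such that each $X_k$ has an absolutely continuous distribution function $F_k$. Let $s>0$ and let $t=t(n,s)>0$ be the unique solution of $$\sum_{k=1}^n \int_0^{t} x\, dF_k(x) = s.$$ Let $N(n,s)$ and $S_{A(n,s)}$ be as defined in the context, and let $p_n=P(N(n,s)<n)$. Then $$\mathrm E(N(n,s)) \le p_n\left(\sum_{k=1}^n F_k(t) - \frac{s-\mathrm E(S_{A(n,s)})}{t}\right) + n(1-p_n).$$
   Context: Define a total order on $\{X_1,\dots,X_n\}$ by $X_i\prec X_j$ if either $X_i<X_j$, or $X_i=X_j$ and $i<j$. Let $\pi$ be the unique permutation of $\{1,\dots,n\}$ with $X_{\pi(1)}\prec X_{\pi(2)}\prec\cdots\prec X_{\pi(n)}$. Let $A(n,s)=\{\pi(1),\dots,\pi(k)\}$ where $k$ is the largest integer in $\{0,1,\dots,n\}$ with $X_{\pi(1)}+\cdots+X_{\pi(k)}\le s$ (so $A(n,s)=\emptyset$ if $X_{\pi(1)}>s$). Then $N(n,s)=|A(n,s)|$ is the maximum number of observations among $X_1,\dots,X_n$ whose sum does not exceed $s$, and $S_{A(n,s)}=\sum_{i\in A(n,s)} X_i$ (note $S_{A(n,s)}\le s$). *)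

theory Defs
  imports "HOL-Probability.Probability"
begin

definition prec :: "(nat \<Rightarrow> real) \<Rightarrow> nat \<Rightarrow> nat \<Rightarrow> bool" where
  "prec x i j \<longleftrightarrow> x i < x j \<or> (x i = x j \<and> i < j)"

definition sort_perm :: "(nat \<Rightarrow> real) \<Rightarrow> nat \<Rightarrow> nat \<Rightarrow> nat" where
  "sort_perm x n = (THE \<pi>. \<pi> permutes {1..n} \<and>
      (\<forall>i\<in>{1..n}. \<forall>j\<in>{1..n}. i < j \<longrightarrow> prec x (\<pi> i) (\<pi> j)))"

definition kmax :: "(nat \<Rightarrow> real) \<Rightarrow> nat \<Rightarrow> real \<Rightarrow> nat" where
  "kmax x n s = (GREATEST k. k \<le> n \<and> (\<Sum>i=1..k. x (sort_perm x n i)) \<le> s)"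

definition Aset :: "(nat \<Rightarrow> real) \<Rightarrow> nat \<Rightarrow> real \<Rightarrow> nat set" where
  "Aset x n s = sort_perm x n ` {1..kmax x n s}"

definition Ncount :: "(nat \<Rightarrow> real) \<Rightarrow> nat \<Rightarrow> real \<Rightarrow> nat" where
  "Ncount x n s = card (Aset x n s)"

definition SA :: "(nat \<Rightarrow> real) \<Rightarrow> nat \<Rightarrow> real \<Rightarrow> real" where
  "SA x n s = (\<Sum>i\<in>Aset x n s. x i)"

definition abs_cont_fun :: "(real \<Rightarrow> real) \<Rightarrow> bool" where
  "abs_cont_fun F \<longleftrightarrow> (\<forall>\<epsilon>>0. \<exists>\<delta>>0. \<forall>m (a::nat \<Rightarrow> real) b.
      (\<forall>i<m. a i \<le> b i) \<and>
      (\<forall>i<m. \<forall>j<m. i \<noteq> j \<longrightarrow> {a i<..<b i} \<inter> {a j<..<b j} = {}) \<and>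
      (\<Sum>i<m. b i - a i) < \<delta> \<longrightarrow> (\<Sum>i<m. \<bar>F (b i) - F (a i)\<bar>) < \<epsilon>)"

end

theory Submission
  imports Defs
begin

(* For any threshold t and any set A of indices,
     t |A| - S_A = sum_{k in A} (t - X_k) <= sum_k max 0 (t - X_k),
   and E max 0 (t - X_k) = t F_k(t) - E[X_k; X_k <= t]. Summing over k and using the equation
   defining t gives t E N - E S_A <= t sum_k F_k(t) - s. Since also E N <= n, the expectation
   E N lies below every convex combination of the two bounds, in particular the one with
   weights p_n and 1 - p_n. The ordering of the observations enters only through
   measurability: A(n,s) is the set of indices whose prefix sum in the sorted order is at most s. *)

lemma permutes_Collect_eq_image:
  assumes "\<pi> permutes S"
  shows "{j \<in> S. P j} = \<pi> ` {i \<in> S. P (\<pi> i)}"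
proof (intro set_eqI iffI)
  fix j
  assume "j \<in> {j \<in> S. P j}"
  then show "j \<in> \<pi> ` {i \<in> S. P (\<pi> i)}"
    using permutes_inverses(1)[OF assms, of j] permutes_in_image[OF permutes_inv[OF assms], of j]
    by (intro image_eqI[of j \<pi> "inv \<pi> j"]) auto
next
  fix j
  assume "j \<in> \<pi> ` {i \<in> S. P (\<pi> i)}"
  then show "j \<in> {j \<in> S. P j}"
    using permutes_in_image[OF assms] by auto
qed

lemma sum_le_sum_max_0:
  fixes f :: "'a \<Rightarrow> 'b::linordered_ab_group_add"
  assumes "finite I" "A \<subseteq> I"
  shows "(\<Sum>k\<in>A. f k) \<le> (\<Sum>k\<in>I. max 0 (f k))"
proof -
  have "(\<Sum>k\<in>A. f k) \<le> (\<Sum>k\<in>A. max 0 (f k))"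
    by (intro sum_mono) simp
  also have "\<dots> \<le> (\<Sum>k\<in>I. max 0 (f k))"
    using assms by (intro sum_mono2) auto
  finally show ?thesis .
qed

section \<open>Sorting the observations\<close>

lemma prec_irrefl: "\<not> prec x i i"
  by (simp add: prec_def)

lemma prec_asym: "prec x i j \<Longrightarrow> \<not> prec x j i"
  by (auto simp: prec_def)

lemma prec_trans: "prec x i j \<Longrightarrow> prec x j k \<Longrightarrow> prec x i k"
  by (auto simp: prec_def)

lemma prec_total: "i \<noteq> j \<Longrightarrow> prec x i j \<or> prec x j i"
  by (auto simp: prec_def)

definition prec_rank :: "(nat \<Rightarrow> real) \<Rightarrow> nat \<Rightarrow> nat \<Rightarrow> nat" where
  "prec_rank x n i = card {j \<in> {1..n}. prec x j i}"

lemma prec_rank_strict_mono: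
  assumes "prec x i j" "i \<in> {1..n}"
  shows "prec_rank x n i < prec_rank x n j"
proof -
  have "{l \<in> {1..n}. prec x l i} \<subset> {l \<in> {1..n}. prec x l j}"
    using assms prec_trans[of x _ i j] prec_irrefl[of x i] by blast
  then show ?thesis
    unfolding prec_rank_def by (intro psubset_card_mono) auto
qed

lemma prec_rank_less:
  assumes "i \<in> {1..n}"
  shows "prec_rank x n i < n"
proof -
  have "prec_rank x n i \<le> card ({1..n} - {i})"
    unfolding prec_rank_def using prec_irrefl[of x i] by (intro card_mono) auto
  then show ?thesis
    using assms by auto
qed

lemma inj_on_prec_rank: "inj_on (prec_rank x n) {1..n}"
proof (rule inj_onI, rule ccontr)
  fix i j
  assume "i \<in> {1..n}" "j \<in> {1..n}" "prec_rank x n i = prec_rank x n j" "i \<noteq> j"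
  then show False
    using prec_total[of i j x] prec_rank_strict_mono[of x i j n] prec_rank_strict_mono[of x j i n]
    by auto
qed

definition is_sort_perm :: "(nat \<Rightarrow> real) \<Rightarrow> nat \<Rightarrow> (nat \<Rightarrow> nat) \<Rightarrow> bool" where
  "is_sort_perm x n \<pi> \<longleftrightarrow> \<pi> permutes {1..n} \<and>
      (\<forall>i\<in>{1..n}. \<forall>j\<in>{1..n}. i < j \<longrightarrow> prec x (\<pi> i) (\<pi> j))"

lemma is_sort_perm_prec_iff:
  assumes "is_sort_perm x n \<pi>" "i \<in> {1..n}" "j \<in> {1..n}"
  shows "prec x (\<pi> i) (\<pi> j) \<longleftrightarrow> i < j"
proof
  assume h: "prec x (\<pi> i) (\<pi> j)"
  show "i < j"
  proof (rule ccontr)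
    assume "\<not> i < j"
    then consider "i = j" | "j < i"
      by linarith
    then show False
    proof cases
      case 1
      then show False
        using h prec_irrefl by metis
    next
      case 2
      then have "prec x (\<pi> j) (\<pi> i)"
        using assms unfolding is_sort_perm_def by blast
      then show False
        using h prec_asym by blast
    qed
  qed
next
  assume "i < j"
  then show "prec x (\<pi> i) (\<pi> j)"
    using assms unfolding is_sort_perm_def by blast
qed

lemma prec_rank_sort_perm:
  assumes "is_sort_perm x n \<pi>" "i \<in> {1..n}"
  shows "prec_rank x n (\<pi> i) = i - 1"
proof -
  have \<pi>: "\<pi> permutes {1..n}"
    using assms(1) by (simp add: is_sort_perm_def)
  have "{j \<in> {1..n}. prec x j (\<pi> i)} = \<pi> ` {l \<in> {1..n}. prec x (\<pi> l) (\<pi> i)}"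
    using \<pi> by (rule permutes_Collect_eq_image)
  also have "{l \<in> {1..n}. prec x (\<pi> l) (\<pi> i)} = {1..<i}"
    using is_sort_perm_prec_iff[OF assms(1) _ assms(2)] assms(2) by auto
  finally show ?thesis
    unfolding prec_rank_def using permutes_inj_on[OF \<pi>, of "{1..<i}"]
    by (simp add: card_image)
qed

lemma ex_is_sort_perm: "\<exists>\<pi>. is_sort_perm x n \<pi>"
proof -
  define \<rho> where "\<rho> i = (if i \<in> {1..n} then Suc (prec_rank x n i) else i)" for i
  have "inj_on \<rho> {1..n}"
  proof (rule inj_onI)
    fix i j
    assume ij: "i \<in> {1..n}" "j \<in> {1..n}" and "\<rho> i = \<rho> j"
    then have "prec_rank x n i = prec_rank x n j"
      by (simp add: \<rho>_def)
    then show "i = j"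
      using ij by (rule inj_onD[OF inj_on_prec_rank])
  qed
  moreover have "\<rho> ` {1..n} \<subseteq> {1..n}"
    using prec_rank_less by (auto simp: \<rho>_def Suc_leI)
  ultimately have "bij_betw \<rho> {1..n} {1..n}"
    by (simp add: bij_betw_def endo_inj_surj)
  then have \<rho>: "\<rho> permutes {1..n}"
    by (rule bij_imp_permutes) (auto simp: \<rho>_def)
  define \<pi> where "\<pi> = inv \<rho>"
  have \<pi>: "\<pi> permutes {1..n}"
    unfolding \<pi>_def using \<rho> by (rule permutes_inv)
  have \<pi>_mem: "\<pi> i \<in> {1..n}" if "i \<in> {1..n}" for i
    using that by (simp only: permutes_in_image[OF \<pi>])
  have rank_\<pi>: "prec_rank x n (\<pi> i) = i - 1" if "i \<in> {1..n}" for i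
  proof -
    have "\<rho> (\<pi> i) = i"
      unfolding \<pi>_def by (rule permutes_inverses(1)[OF \<rho>])
    then show ?thesis
      using \<pi>_mem[OF that] by (simp add: \<rho>_def)
  qed
  have "prec x (\<pi> i) (\<pi> j)" if ij: "i \<in> {1..n}" "j \<in> {1..n}" "i < j" for i j
  proof (rule ccontr)
    assume "\<not> prec x (\<pi> i) (\<pi> j)"
    moreover have "\<pi> i \<noteq> \<pi> j"
      using rank_\<pi>[OF ij(1)] rank_\<pi>[OF ij(2)] ij by auto
    ultimately have "prec x (\<pi> j) (\<pi> i)"
      using prec_total by blast
    then have "prec_rank x n (\<pi> j) < prec_rank x n (\<pi> i)"
      using \<pi>_mem[OF ij(2)] by (rule prec_rank_strict_mono)
    then show False
      using rank_\<pi>[OF ij(1)] rank_\<pi>[OF ij(2)] ij by simp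
  qed
  then show ?thesis
    using \<pi> unfolding is_sort_perm_def by blast
qed

lemma is_sort_perm_unique:
  assumes "is_sort_perm x n \<pi>" "is_sort_perm x n \<sigma>"
  shows "\<pi> = \<sigma>"
proof
  fix i
  have \<pi>: "\<pi> permutes {1..n}" and \<sigma>: "\<sigma> permutes {1..n}"
    using assms by (simp_all add: is_sort_perm_def)
  show "\<pi> i = \<sigma> i"
  proof (cases "i \<in> {1..n}")
    case True
    have "prec_rank x n (\<pi> i) = prec_rank x n (\<sigma> i)"
      using prec_rank_sort_perm[OF assms(1) True] prec_rank_sort_perm[OF assms(2) True] by simp
    moreover have "\<pi> i \<in> {1..n}" "\<sigma> i \<in> {1..n}"
      using True by (simp_all only: permutes_in_image[OF \<pi>] permutes_in_image[OF \<sigma>])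
    ultimately show ?thesis
      by (rule inj_onD[OF inj_on_prec_rank])
  next
    case False
    then show ?thesis
      using \<pi> \<sigma> by (simp add: permutes_not_in)
  qed
qed

lemma is_sort_perm_sort_perm: "is_sort_perm x n (sort_perm x n)"
proof -
  obtain \<pi> where \<pi>: "is_sort_perm x n \<pi>"
    using ex_is_sort_perm by blast
  show ?thesis
    unfolding sort_perm_def is_sort_perm_def[symmetric]
    by (rule theI[where P = "is_sort_perm x n", OF \<pi> is_sort_perm_unique[OF _ \<pi>]])
qed

section \<open>The set A(n,s)\<close>

lemma
  assumes "0 \<le> s"
  shows kmax_le: "kmax x n s \<le> n"
    and kmax_prefix_sum_le: "(\<Sum>i=1..kmax x n s. x (sort_perm x n i)) \<le> s"
proof -
  let ?P = "\<lambda>k. k \<le> n \<and> (\<Sum>i=1..k. x (sort_perm x n i)) \<le> s"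
  have "?P (kmax x n s)"
    unfolding kmax_def by (rule GreatestI_nat[of ?P 0 n]) (use assms in auto)
  then show "kmax x n s \<le> n" "(\<Sum>i=1..kmax x n s. x (sort_perm x n i)) \<le> s"
    by simp_all
qed

lemma le_kmax:
  assumes "m \<le> n" "(\<Sum>i=1..m. x (sort_perm x n i)) \<le> s"
  shows "m \<le> kmax x n s"
  unfolding kmax_def
  by (rule Greatest_le_nat[of "\<lambda>k. k \<le> n \<and> (\<Sum>i=1..k. x (sort_perm x n i)) \<le> s" m n])
    (use assms in auto)

lemma Aset_subset:
  assumes "0 \<le> s"
  shows "Aset x n s \<subseteq> {1..n}"
proof
  fix i
  assume "i \<in> Aset x n s"
  then obtain a where a: "a \<in> {1..kmax x n s}" and i: "i = sort_perm x n a"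
    unfolding Aset_def by blast
  have "sort_perm x n permutes {1..n}"
    using is_sort_perm_sort_perm by (simp add: is_sort_perm_def)
  moreover have "a \<in> {1..n}"
    using a kmax_le[OF assms, of x n] by simp
  ultimately show "i \<in> {1..n}"
    unfolding i by (simp only: permutes_in_image)
qed

definition prec_prefix_sum :: "(nat \<Rightarrow> real) \<Rightarrow> nat \<Rightarrow> nat \<Rightarrow> real" where
  "prec_prefix_sum x n i = (\<Sum>j=1..n. if prec x j i \<or> j = i then x j else 0)"

lemma prec_prefix_sum_sort_perm:
  assumes "is_sort_perm x n \<pi>" "a \<in> {1..n}"
  shows "prec_prefix_sum x n (\<pi> a) = (\<Sum>l=1..a. x (\<pi> l))"
proof -
  have \<pi>: "\<pi> permutes {1..n}"
    using assms(1) by (simp add: is_sort_perm_def)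
  have "prec_prefix_sum x n (\<pi> a) = (\<Sum>l=1..n. if prec x (\<pi> l) (\<pi> a) \<or> \<pi> l = \<pi> a then x (\<pi> l) else 0)"
    unfolding prec_prefix_sum_def by (subst sum.permute[OF \<pi>]) simp
  also have "\<dots> = (\<Sum>l=1..n. if l \<le> a then x (\<pi> l) else 0)"
  proof (rule sum.cong)
    fix l
    assume l: "l \<in> {1..n}"
    have "prec x (\<pi> l) (\<pi> a) \<or> \<pi> l = \<pi> a \<longleftrightarrow> l < a \<or> l = a"
      unfolding is_sort_perm_prec_iff[OF assms(1) l assms(2)] inj_eq[OF permutes_inj[OF \<pi>]] ..
    then show "(if prec x (\<pi> l) (\<pi> a) \<or> \<pi> l = \<pi> a then x (\<pi> l) else 0) =
        (if l \<le> a then x (\<pi> l) else 0)"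
      by auto
  qed simp
  also have "\<dots> = (\<Sum>l\<in>{l \<in> {1..n}. l \<le> a}. x (\<pi> l))"
    by (rule sum.inter_filter[symmetric]) simp
  also have "{l \<in> {1..n}. l \<le> a} = {1..a}"
    using assms(2) by auto
  finally show ?thesis .
qed

lemma Aset_eq_prefix_sum_le:
  assumes nonneg: "\<And>j. j \<in> {1..n} \<Longrightarrow> 0 \<le> x j" and "0 \<le> s"
  shows "Aset x n s = {i \<in> {1..n}. prec_prefix_sum x n i \<le> s}"
proof -
  define \<pi> where "\<pi> = sort_perm x n"
  define k where "k = kmax x n s"
  have sorted: "is_sort_perm x n \<pi>"
    unfolding \<pi>_def by (rule is_sort_perm_sort_perm)
  then have \<pi>: "\<pi> permutes {1..n}"
    by (simp add: is_sort_perm_def)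
  have k: "k \<le> n" "(\<Sum>l=1..k. x (\<pi> l)) \<le> s"
    unfolding k_def \<pi>_def using kmax_le kmax_prefix_sum_le \<open>0 \<le> s\<close> by auto
  have mem_iff: "\<pi> a \<in> Aset x n s \<longleftrightarrow> prec_prefix_sum x n (\<pi> a) \<le> s" if a: "a \<in> {1..n}" for a
  proof -
    have "\<pi> a \<in> Aset x n s \<longleftrightarrow> a \<le> k"
      using a inj_image_mem_iff[OF permutes_inj[OF \<pi>]] unfolding Aset_def \<pi>_def k_def by auto
    also have "\<dots> \<longleftrightarrow> (\<Sum>l=1..a. x (\<pi> l)) \<le> s"
    proof
      assume "a \<le> k"
      then have "(\<Sum>l=1..a. x (\<pi> l)) \<le> (\<Sum>l=1..k. x (\<pi> l))"
        using k(1) nonneg permutes_in_image[OF \<pi>] by (intro sum_mono2) auto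
      then show "(\<Sum>l=1..a. x (\<pi> l)) \<le> s"
        using k(2) by linarith
    next
      assume "(\<Sum>l=1..a. x (\<pi> l)) \<le> s"
      then show "a \<le> k"
        using a unfolding k_def \<pi>_def by (intro le_kmax) auto
    qed
    also have "\<dots> \<longleftrightarrow> prec_prefix_sum x n (\<pi> a) \<le> s"
      using prec_prefix_sum_sort_perm[OF sorted a] by simp
    finally show ?thesis .
  qed
  have "Aset x n s = {i \<in> {1..n}. i \<in> Aset x n s}"
    using Aset_subset[OF \<open>0 \<le> s\<close>] by blast
  also have "\<dots> = \<pi> ` {a \<in> {1..n}. \<pi> a \<in> Aset x n s}"
    by (rule permutes_Collect_eq_image[OF \<pi>])
  also have "\<dots> = \<pi> ` {a \<in> {1..n}. prec_prefix_sum x n (\<pi> a) \<le> s}"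
    using mem_iff by (intro arg_cong[where f = "image \<pi>"]) auto
  also have "\<dots> = {i \<in> {1..n}. prec_prefix_sum x n i \<le> s}"
    by (rule permutes_Collect_eq_image[OF \<pi>, symmetric])
  finally show ?thesis .
qed

lemma Ncount_eq_sum:
  assumes "\<And>j. j \<in> {1..n} \<Longrightarrow> 0 \<le> x j" "0 \<le> s"
  shows "real (Ncount x n s) = (\<Sum>i=1..n. if prec_prefix_sum x n i \<le> s then 1 else 0)"
proof -
  have "real (Ncount x n s) = (\<Sum>i\<in>{i \<in> {1..n}. prec_prefix_sum x n i \<le> s}. 1)"
    using Aset_eq_prefix_sum_le[OF assms] by (simp add: Ncount_def)
  also have "\<dots> = (\<Sum>i=1..n. if prec_prefix_sum x n i \<le> s then 1 else 0)"
    by (rule sum.inter_filter) simp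
  finally show ?thesis .
qed

lemma SA_eq_sum:
  assumes "\<And>j. j \<in> {1..n} \<Longrightarrow> 0 \<le> x j" "0 \<le> s"
  shows "SA x n s = (\<Sum>i=1..n. if prec_prefix_sum x n i \<le> s then x i else 0)"
proof -
  have "SA x n s = (\<Sum>i\<in>{i \<in> {1..n}. prec_prefix_sum x n i \<le> s}. x i)"
    using Aset_eq_prefix_sum_le[OF assms] by (simp add: SA_def)
  also have "\<dots> = (\<Sum>i=1..n. if prec_prefix_sum x n i \<le> s then x i else 0)"
    by (rule sum.inter_filter) simp
  finally show ?thesis .
qed

lemma Ncount_le:
  assumes "0 \<le> s"
  shows "Ncount x n s \<le> n"
  using card_mono[OF _ Aset_subset[OF assms]] by (simp add: Ncount_def)

lemma SA_le:
  assumes "0 \<le> s"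
  shows "SA x n s \<le> s"
proof -
  have "inj_on (sort_perm x n) {1..kmax x n s}"
    using is_sort_perm_sort_perm[of x n] permutes_inj_on by (auto simp: is_sort_perm_def)
  then have "SA x n s = (\<Sum>i=1..kmax x n s. x (sort_perm x n i))"
    unfolding SA_def Aset_def by (simp add: sum.reindex)
  then show ?thesis
    using kmax_prefix_sum_le[OF assms] by simp
qed

lemma SA_nonneg:
  assumes "\<And>j. j \<in> {1..n} \<Longrightarrow> 0 \<le> x j" "0 \<le> s"
  shows "0 \<le> SA x n s"
  unfolding SA_def using assms(1) Aset_subset[OF assms(2), of x n] by (intro sum_nonneg) blast

lemma Ncount_SA_bound:
  assumes "0 \<le> s"
  shows "t * real (Ncount x n s) - SA x n s \<le> (\<Sum>k=1..n. max 0 (t - x k))"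
proof -
  have "t * real (Ncount x n s) - SA x n s = (\<Sum>k\<in>Aset x n s. t - x k)"
    by (simp add: Ncount_def SA_def sum_subtractf)
  also have "\<dots> \<le> (\<Sum>k=1..n. max 0 (t - x k))"
    using Aset_subset[OF assms] by (intro sum_le_sum_max_0) auto
  finally show ?thesis .
qed

lemma borel_measurable_prec_prefix_sum:
  assumes X: "\<And>k. k \<in> {1..n} \<Longrightarrow> X k \<in> borel_measurable M" and i: "i \<in> {1..n}"
  shows "(\<lambda>\<omega>. prec_prefix_sum (\<lambda>k. X k \<omega>) n i) \<in> borel_measurable M"
  unfolding prec_prefix_sum_def
proof (rule borel_measurable_sum)
  fix j
  assume "j \<in> {1..n}"
  note [measurable] = X[OF i] X[OF this]
  show "(\<lambda>\<omega>. if prec (\<lambda>k. X k \<omega>) j i \<or> j = i then X j \<omega> else 0) \<in> borel_measurable M"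
    unfolding prec_def by measurable
qed

lemma borel_measurable_Ncount:
  assumes X: "\<And>k. k \<in> {1..n} \<Longrightarrow> X k \<in> borel_measurable M"
    and nonneg: "\<And>k \<omega>. k \<in> {1..n} \<Longrightarrow> \<omega> \<in> space M \<Longrightarrow> 0 \<le> X k \<omega>" and "0 \<le> s"
  shows "(\<lambda>\<omega>. real (Ncount (\<lambda>k. X k \<omega>) n s)) \<in> borel_measurable M"
proof -
  have "(\<lambda>\<omega>. \<Sum>i=1..n. if prec_prefix_sum (\<lambda>k. X k \<omega>) n i \<le> s then 1 else 0 :: real)
      \<in> borel_measurable M"
  proof (rule borel_measurable_sum)
    fix i
    assume "i \<in> {1..n}"
    note [measurable] = borel_measurable_prec_prefix_sum[OF X this]
    show "(\<lambda>\<omega>. if prec_prefix_sum (\<lambda>k. X k \<omega>) n i \<le> s then 1 else 0 :: real) \<in> borel_measurable M"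
      by measurable
  qed
  moreover have "real (Ncount (\<lambda>k. X k \<omega>) n s) =
      (\<Sum>i=1..n. if prec_prefix_sum (\<lambda>k. X k \<omega>) n i \<le> s then 1 else 0)" if "\<omega> \<in> space M" for \<omega>
    using that nonneg \<open>0 \<le> s\<close> by (intro Ncount_eq_sum) auto
  ultimately show ?thesis
    by (simp cong: measurable_cong)
qed

lemma borel_measurable_SA:
  assumes X: "\<And>k. k \<in> {1..n} \<Longrightarrow> X k \<in> borel_measurable M"
    and nonneg: "\<And>k \<omega>. k \<in> {1..n} \<Longrightarrow> \<omega> \<in> space M \<Longrightarrow> 0 \<le> X k \<omega>" and "0 \<le> s"
  shows "(\<lambda>\<omega>. SA (\<lambda>k. X k \<omega>) n s) \<in> borel_measurable M"
proof -
  have "(\<lambda>\<omega>. \<Sum>i=1..n. if prec_prefix_sum (\<lambda>k. X k \<omega>) n i \<le> s then X i \<omega> else 0)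
      \<in> borel_measurable M"
  proof (rule borel_measurable_sum)
    fix i
    assume "i \<in> {1..n}"
    note [measurable] = borel_measurable_prec_prefix_sum[OF X this] X[OF this]
    show "(\<lambda>\<omega>. if prec_prefix_sum (\<lambda>k. X k \<omega>) n i \<le> s then X i \<omega> else 0) \<in> borel_measurable M"
      by measurable
  qed
  moreover have "SA (\<lambda>k. X k \<omega>) n s =
      (\<Sum>i=1..n. if prec_prefix_sum (\<lambda>k. X k \<omega>) n i \<le> s then X i \<omega> else 0)" if "\<omega> \<in> space M" for \<omega>
    using that nonneg \<open>0 \<le> s\<close> by (intro SA_eq_sum) auto
  ultimately show ?thesis
    by (simp cong: measurable_cong)
qed

section \<open>Expectations\<close>

lemma (in prob_space) integrable_max_0_diff:
  fixes X :: "'a \<Rightarrow> real" and t :: real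
  assumes X: "random_variable borel X" and nonneg: "\<And>\<omega>. \<omega> \<in> space M \<Longrightarrow> 0 \<le> X \<omega>"
  shows "integrable M (\<lambda>\<omega>. max 0 (t - X \<omega>))"
proof (rule integrable_const_bound[where B = "\<bar>t\<bar>"])
  show "AE \<omega> in M. norm (max 0 (t - X \<omega>)) \<le> \<bar>t\<bar>"
  proof (rule AE_I2)
    fix \<omega>
    assume "\<omega> \<in> space M"
    then have "0 \<le> X \<omega>"
      by (rule nonneg)
    then show "norm (max 0 (t - X \<omega>)) \<le> \<bar>t\<bar>"
      by auto
  qed
  show "(\<lambda>\<omega>. max 0 (t - X \<omega>)) \<in> borel_measurable M"
    using X by measurable
qed

lemma (in prob_space) expectation_max_0_diff:
  fixes X :: "'a \<Rightarrow> real" and t :: real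
  assumes X: "random_variable borel X" and nonneg: "\<And>\<omega>. \<omega> \<in> space M \<Longrightarrow> 0 \<le> X \<omega>"
  shows "expectation (\<lambda>\<omega>. max 0 (t - X \<omega>)) =
    t * cdf (distr M borel X) t - (\<integral>x. indicator {0..t} x * x \<partial>distr M borel X)"
proof -
  note [measurable] = X
  let ?I = "\<lambda>\<omega>. indicator {0..t} (X \<omega>) :: real"
  have int_I: "integrable M ?I"
    by (rule integrable_const_bound[where B = 1]) (auto simp: indicator_def)
  have int_IX: "integrable M (\<lambda>\<omega>. ?I \<omega> * X \<omega>)"
    by (rule integrable_const_bound[where B = "\<bar>t\<bar>"]) (auto simp: indicator_def)
  have "cdf (distr M borel X) t = (\<integral>x. indicator {..t} x \<partial>distr M borel X)"
    by (simp add: cdf_def)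
  also have "\<dots> = expectation (\<lambda>\<omega>. indicator {..t} (X \<omega>))"
    by (rule integral_distr) auto
  also have "\<dots> = expectation ?I"
    using nonneg by (intro Bochner_Integration.integral_cong) (auto simp: indicator_def)
  finally have cdf_eq: "cdf (distr M borel X) t = expectation ?I" .
  have mean_eq: "(\<integral>x. indicator {0..t} x * x \<partial>distr M borel X) = expectation (\<lambda>\<omega>. ?I \<omega> * X \<omega>)"
    by (rule integral_distr) auto
  have "expectation (\<lambda>\<omega>. max 0 (t - X \<omega>)) = expectation (\<lambda>\<omega>. t * ?I \<omega> - ?I \<omega> * X \<omega>)"
    using nonneg by (intro Bochner_Integration.integral_cong) (auto simp: indicator_def)
  also have "\<dots> = t * expectation ?I - expectation (\<lambda>\<omega>. ?I \<omega> * X \<omega>)"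
    using int_I int_IX by simp
  finally show ?thesis
    unfolding cdf_eq mean_eq .
qed

lemma (in prob_space) integrable_Ncount:
  assumes "\<And>k. k \<in> {1..n} \<Longrightarrow> random_variable borel (X k)"
    and "\<And>k \<omega>. k \<in> {1..n} \<Longrightarrow> \<omega> \<in> space M \<Longrightarrow> 0 \<le> X k \<omega>" and "0 \<le> s"
  shows "integrable M (\<lambda>\<omega>. real (Ncount (\<lambda>k. X k \<omega>) n s))"
  using borel_measurable_Ncount[OF assms] Ncount_le[OF \<open>0 \<le> s\<close>]
  by (intro integrable_const_bound[where B = n] AE_I2) auto

lemma (in prob_space) integrable_SA:
  assumes "\<And>k. k \<in> {1..n} \<Longrightarrow> random_variable borel (X k)"
    and "\<And>k \<omega>. k \<in> {1..n} \<Longrightarrow> \<omega> \<in> space M \<Longrightarrow> 0 \<le> X k \<omega>" and "0 \<le> s"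
  shows "integrable M (\<lambda>\<omega>. SA (\<lambda>k. X k \<omega>) n s)"
  using borel_measurable_SA[OF assms] SA_le[OF \<open>0 \<le> s\<close>] SA_nonneg assms(2,3)
  by (intro integrable_const_bound[where B = s] AE_I2) auto

lemma (in prob_space) expectation_Ncount_le:
  fixes X :: "nat \<Rightarrow> 'a \<Rightarrow> real"
  assumes X: "\<And>k. k \<in> {1..n} \<Longrightarrow> random_variable borel (X k)"
    and nonneg: "\<And>k \<omega>. k \<in> {1..n} \<Longrightarrow> \<omega> \<in> space M \<Longrightarrow> 0 \<le> X k \<omega>"
    and "0 \<le> s" "0 < t"
    and t_sol: "(\<Sum>k=1..n. \<integral>x. indicator {0..t} x * x \<partial>distr M borel (X k)) = s"
  shows "expectation (\<lambda>\<omega>. real (Ncount (\<lambda>k. X k \<omega>) n s)) \<le>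
    (\<Sum>k=1..n. cdf (distr M borel (X k)) t) - (s - expectation (\<lambda>\<omega>. SA (\<lambda>k. X k \<omega>) n s)) / t"
proof -
  let ?N = "\<lambda>\<omega>. real (Ncount (\<lambda>k. X k \<omega>) n s)" and ?S = "\<lambda>\<omega>. SA (\<lambda>k. X k \<omega>) n s"
  have int_N: "integrable M ?N"
    by (rule integrable_Ncount[of n X s]) (use X nonneg \<open>0 \<le> s\<close> in auto)
  have int_S: "integrable M ?S"
    by (rule integrable_SA[of n X s]) (use X nonneg \<open>0 \<le> s\<close> in auto)
  have int_gap: "integrable M (\<lambda>\<omega>. max 0 (t - X k \<omega>))" if "k \<in> {1..n}" for k
    using X nonneg that by (intro integrable_max_0_diff) auto
  have "t * expectation ?N - expectation ?S = expectation (\<lambda>\<omega>. t * ?N \<omega> - ?S \<omega>)"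
    using int_N int_S by simp
  also have "\<dots> \<le> expectation (\<lambda>\<omega>. \<Sum>k=1..n. max 0 (t - X k \<omega>))"
    using int_N int_S int_gap Ncount_SA_bound[OF \<open>0 \<le> s\<close>] by (intro integral_mono) auto
  also have "\<dots> = (\<Sum>k=1..n. expectation (\<lambda>\<omega>. max 0 (t - X k \<omega>)))"
    using int_gap by (rule Bochner_Integration.integral_sum)
  also have "\<dots> = (\<Sum>k=1..n. t * cdf (distr M borel (X k)) t
      - (\<integral>x. indicator {0..t} x * x \<partial>distr M borel (X k)))"
    using X nonneg by (intro sum.cong expectation_max_0_diff) auto
  also have "\<dots> = t * (\<Sum>k=1..n. cdf (distr M borel (X k)) t) - s"
    unfolding sum_subtractf t_sol sum_distrib_left ..
  finally show ?thesis
    using \<open>0 < t\<close> by (simp add: field_simps)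
qed

theorem mainTheorem2:
  fixes M :: "'a measure" and n :: nat and X :: "nat \<Rightarrow> 'a \<Rightarrow> real" and s t :: real
  assumes "prob_space M"
    and "n \<ge> 1"
    and rv: "\<And>k. k \<in> {1..n} \<Longrightarrow> X k \<in> borel_measurable M"
    and pos: "\<And>k \<omega>. k \<in> {1..n} \<Longrightarrow> \<omega> \<in> space M \<Longrightarrow> X k \<omega> > 0"
    and joint: "absolutely_continuous (PiM {1..n} (\<lambda>_. lborel))
                  (distr M (PiM {1..n} (\<lambda>_. lborel)) (\<lambda>\<omega>. \<lambda>k\<in>{1..n}. X k \<omega>))"
    and marg: "\<And>k. k \<in> {1..n} \<Longrightarrow> abs_cont_fun (cdf (distr M borel (X k)))"
    and "s > 0"
    and "t > 0"
    and t_sol: "(\<Sum>k=1..n. integral\<^sup>L (distr M borel (X k)) (\<lambda>x. indicator {0..t} x * x)) = s"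
    and t_uniq: "\<And>u. u > 0 \<Longrightarrow>
        (\<Sum>k=1..n. integral\<^sup>L (distr M borel (X k)) (\<lambda>x. indicator {0..u} x * x)) = s \<Longrightarrow> u = t"
  shows "(let p = measure M {\<omega> \<in> space M. Ncount (\<lambda>k. X k \<omega>) n s < n} in
          (\<integral>\<omega>. real (Ncount (\<lambda>k. X k \<omega>) n s) \<partial>M)
            \<le> p * ((\<Sum>k=1..n. cdf (distr M borel (X k)) t)
                    - (s - (\<integral>\<omega>. SA (\<lambda>k. X k \<omega>) n s \<partial>M)) / t)
              + real n * (1 - p))"
proof -
  interpret prob_space M by fact
  have nonneg: "0 \<le> X k \<omega>" if "k \<in> {1..n}" "\<omega> \<in> space M" for k \<omega>
    using pos[OF that] by simp
  let ?N = "\<lambda>\<omega>. real (Ncount (\<lambda>k. X k \<omega>) n s)"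
  define p where "p = measure M {\<omega> \<in> space M. Ncount (\<lambda>k. X k \<omega>) n s < n}"
  define B where "B = (\<Sum>k=1..n. cdf (distr M borel (X k)) t)
    - (s - (\<integral>\<omega>. SA (\<lambda>k. X k \<omega>) n s \<partial>M)) / t"
  have le_B: "expectation ?N \<le> B"
    unfolding B_def using rv nonneg \<open>s > 0\<close> \<open>t > 0\<close> t_sol
    by (intro expectation_Ncount_le) auto
  have le_n: "expectation ?N \<le> real n"
    using integrable_Ncount[of n X s] rv nonneg \<open>s > 0\<close> Ncount_le
    by (intro integral_le_const AE_I2) auto
  have "0 \<le> p" "p \<le> 1"
    unfolding p_def by simp_all
  have "expectation ?N = p * expectation ?N + (1 - p) * expectation ?N"
    by (simp add: algebra_simps)
  also have "\<dots> \<le> p * B + (1 - p) * real n"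
    using le_B le_n \<open>0 \<le> p\<close> \<open>p \<le> 1\<close> by (intro add_mono mult_left_mono) auto
  finally show ?thesis
    unfolding Let_def p_def[symmetric] B_def[symmetric] by (simp add: mult.commute)
qed

end
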